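(* Let $M$ be a complete pointed metric space and let $\varphi_1,\dots,\varphi_n$ be non-negative Lipschitz functions on $M$ with bounded support such that $\varphi_1+\cdots+\varphi_n=1$ on $M$. Suppose $A_1,\dots,A_n$ are subsets of $M$ each containing the base point, with $\mathrm{supp}(\varphi_k)\subset A_k$ for all $k$. Then $\mathcal{F}(M)$ is isomorphic to a complemented subspace of $\mathcal{F}(A_1)\oplus\cdots\oplus\mathcal{F}(A_n)$.
   Context: For a pointed metric space $(M,d)$ with base point $0$, ${\mathrm{Lip}}_0(M)$ is the Banach space of Lipschitz $f:M\to\mathbb{R}$ with $f(0)=0$, normed by the Lipschitz constant. The Lipschitz-free space $\mathcal{F}(M)$ is the closed linear span in ${\mathrm{Lip}}_0(M)^*$ of the evaluation functionals $\delta(x)$, $x\in M$. For a subset $A\subseteq M$ containing the base point, $\mathcal{F}(A)$ (with the restricted metric) is identified isometrically with the closed linear span of $\delta(A)$ in $\mathcal{F}(M)$. The direct sum is any finite direct sum of Banach spaces (all such norms are equivalent). *)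

theory Defs
  imports "HOL-Analysis.Analysis"
begin

text \<open>Pointed metric space: carrier M, metric d, base point p (all explicit).
  Lipschitz functions are represented as functions on the ambient type,
  normalised to vanish outside M.\<close>

definition lip_on :: "'a set \<Rightarrow> ('a \<Rightarrow> 'a \<Rightarrow> real) \<Rightarrow> real \<Rightarrow> ('a \<Rightarrow> real) \<Rightarrow> bool" where
  "lip_on M d L f \<longleftrightarrow> L \<ge> 0 \<and> (\<forall>x\<in>M. \<forall>y\<in>M. \<bar>f x - f y\<bar> \<le> L * d x y)"

definition lipnorm :: "'a set \<Rightarrow> ('a \<Rightarrow> 'a \<Rightarrow> real) \<Rightarrow> ('a \<Rightarrow> real) \<Rightarrow> real" where
  "lipnorm M d f = Inf {L. lip_on M d L f}"

definition Lip0 :: "'a set \<Rightarrow> ('a \<Rightarrow> 'a \<Rightarrow> real) \<Rightarrow> 'a \<Rightarrow> ('a \<Rightarrow> real) set" where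
  "Lip0 M d p = {f. (\<exists>L. lip_on M d L f) \<and> f p = 0 \<and> (\<forall>x. x \<notin> M \<longrightarrow> f x = 0)}"

definition Lip0_dual :: "'a set \<Rightarrow> ('a \<Rightarrow> 'a \<Rightarrow> real) \<Rightarrow> 'a \<Rightarrow> (('a \<Rightarrow> real) \<Rightarrow> real) set" where
  "Lip0_dual M d p = {\<phi>.
     (\<forall>f\<in>Lip0 M d p. \<forall>g\<in>Lip0 M d p. \<phi> (\<lambda>x. f x + g x) = \<phi> f + \<phi> g) \<and>
     (\<forall>f\<in>Lip0 M d p. \<forall>c. \<phi> (\<lambda>x. c * f x) = c * \<phi> f) \<and>
     (\<exists>C. \<forall>f\<in>Lip0 M d p. \<bar>\<phi> f\<bar> \<le> C * lipnorm M d f) \<and>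
     (\<forall>f. f \<notin> Lip0 M d p \<longrightarrow> \<phi> f = 0)}"

definition dual_norm :: "'a set \<Rightarrow> ('a \<Rightarrow> 'a \<Rightarrow> real) \<Rightarrow> 'a \<Rightarrow> (('a \<Rightarrow> real) \<Rightarrow> real) \<Rightarrow> real" where
  "dual_norm M d p \<phi> = Sup {\<bar>\<phi> f\<bar> | f. f \<in> Lip0 M d p \<and> lipnorm M d f \<le> 1}"

definition delta :: "'a set \<Rightarrow> ('a \<Rightarrow> 'a \<Rightarrow> real) \<Rightarrow> 'a \<Rightarrow> 'a \<Rightarrow> (('a \<Rightarrow> real) \<Rightarrow> real)" where
  "delta M d p x = (\<lambda>f. if f \<in> Lip0 M d p then f x else 0)"

text \<open>Free M d p A: the closed linear span of delta(A) in Lip_0(M)^*.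
  For A = M this is F(M); for p \<in> A \<subseteq> M it is the standard isometric copy of F(A)
  inside F(M).\<close>
definition Free :: "'a set \<Rightarrow> ('a \<Rightarrow> 'a \<Rightarrow> real) \<Rightarrow> 'a \<Rightarrow> 'a set \<Rightarrow> (('a \<Rightarrow> real) \<Rightarrow> real) set" where
  "Free M d p A = {\<phi> \<in> Lip0_dual M d p. \<forall>\<epsilon>>0. \<exists>F c. finite F \<and> F \<subseteq> A \<and>
      dual_norm M d p (\<lambda>f. \<phi> f - (\<Sum>x\<in>F. c x * delta M d p x f)) < \<epsilon>}"

definition DSum :: "'a set \<Rightarrow> ('a \<Rightarrow> 'a \<Rightarrow> real) \<Rightarrow> 'a \<Rightarrow> nat \<Rightarrow> (nat \<Rightarrow> 'a set)
    \<Rightarrow> (nat \<Rightarrow> (('a \<Rightarrow> real) \<Rightarrow> real)) set" where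
  "DSum M d p n A = {\<mu>. (\<forall>k<n. \<mu> k \<in> Free M d p (A k)) \<and> (\<forall>k\<ge>n. \<mu> k = (\<lambda>f. 0))}"

definition dsum_norm :: "'a set \<Rightarrow> ('a \<Rightarrow> 'a \<Rightarrow> real) \<Rightarrow> 'a \<Rightarrow> nat
    \<Rightarrow> (nat \<Rightarrow> (('a \<Rightarrow> real) \<Rightarrow> real)) \<Rightarrow> real" where
  "dsum_norm M d p n \<mu> = (\<Sum>k<n. dual_norm M d p (\<mu> k))"

definition fadd :: "('b \<Rightarrow> real) \<Rightarrow> ('b \<Rightarrow> real) \<Rightarrow> ('b \<Rightarrow> real)" where
  "fadd \<phi> \<psi> = (\<lambda>f. \<phi> f + \<psi> f)"
definition fscale :: "real \<Rightarrow> ('b \<Rightarrow> real) \<Rightarrow> ('b \<Rightarrow> real)" where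
  "fscale c \<phi> = (\<lambda>f. c * \<phi> f)"
definition sadd :: "(nat \<Rightarrow> 'b \<Rightarrow> real) \<Rightarrow> (nat \<Rightarrow> 'b \<Rightarrow> real) \<Rightarrow> (nat \<Rightarrow> 'b \<Rightarrow> real)" where
  "sadd \<mu> \<nu> = (\<lambda>k. fadd (\<mu> k) (\<nu> k))"
definition sscale :: "real \<Rightarrow> (nat \<Rightarrow> 'b \<Rightarrow> real) \<Rightarrow> (nat \<Rightarrow> 'b \<Rightarrow> real)" where
  "sscale c \<mu> = (\<lambda>k. fscale c (\<mu> k))"

definition bounded_linear_between ::
  "'x set \<Rightarrow> ('x \<Rightarrow> 'x \<Rightarrow> 'x) \<Rightarrow> (real \<Rightarrow> 'x \<Rightarrow> 'x) \<Rightarrow> ('x \<Rightarrow> real) \<Rightarrow>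
   'y set \<Rightarrow> ('y \<Rightarrow> 'y \<Rightarrow> 'y) \<Rightarrow> (real \<Rightarrow> 'y \<Rightarrow> 'y) \<Rightarrow> ('y \<Rightarrow> real) \<Rightarrow> ('x \<Rightarrow> 'y) \<Rightarrow> bool" where
  "bounded_linear_between X addX scX nX Y addY scY nY T \<longleftrightarrow>
     T ` X \<subseteq> Y \<and>
     (\<forall>x\<in>X. \<forall>y\<in>X. T (addX x y) = addY (T x) (T y)) \<and>
     (\<forall>c. \<forall>x\<in>X. T (scX c x) = scY c (T x)) \<and>
     (\<exists>C. \<forall>x\<in>X. nY (T x) \<le> C * nX x)"

definition Free_iso_complemented_in_sum ::
  "'a set \<Rightarrow> ('a \<Rightarrow> 'a \<Rightarrow> real) \<Rightarrow> 'a \<Rightarrow> nat \<Rightarrow> (nat \<Rightarrow> 'a set) \<Rightarrow> bool" where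
  "Free_iso_complemented_in_sum M d p n A \<longleftrightarrow>
    (let X = Free M d p M; nX = dual_norm M d p;
         Y = DSum M d p n A; nY = dsum_norm M d p n in
     \<exists>Q T S.
       bounded_linear_between Y sadd sscale nY Y sadd sscale nY Q \<and>
       (\<forall>y\<in>Y. Q (Q y) = Q y) \<and>
       bounded_linear_between X fadd fscale nX (Q ` Y) sadd sscale nY T \<and>
       bounded_linear_between (Q ` Y) sadd sscale nY X fadd fscale nX S \<and>
       (\<forall>x\<in>X. S (T x) = x) \<and> (\<forall>z\<in>Q ` Y. T (S z) = z))"

end

theory Submission
  imports Defs
begin

text \<open>
  Multiplication by a Lipschitz function \<open>\<phi>\<close> of bounded support maps \<open>Lip\<^sub>0(M)\<close> boundedly into
  itself, with norm at most \<open>\<parallel>\<phi>\<parallel>\<^sub>\<infinity> + R\<cdot>Lip(\<phi>)\<close> when the support lies in the ball of radius \<open>R\<close>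
  about the base point, because \<open>\<bar>f x\<bar> \<le> Lip(f) d(p,x)\<close>. Its adjoint \<open>T\<^sub>\<phi>\<close> is bounded on
  \<open>Lip\<^sub>0(M)\<^sup>*\<close> and sends \<open>\<delta>(x)\<close> to \<open>\<phi>(x)\<delta>(x)\<close>, so it maps \<open>\<F>(M)\<close> into \<open>\<F>(A)\<close> whenever
  \<open>supp \<phi> \<subseteq> A\<close>. For a partition of unity \<open>\<phi>\<^sub>1 + \<dots> + \<phi>\<^sub>n = 1\<close> the map
  \<open>T\<mu> = (T\<^sub>\<phi>\<^sub>1\<mu>, \<dots>, T\<^sub>\<phi>\<^sub>n\<mu>)\<close> into \<open>\<F>(A\<^sub>1) \<oplus> \<dots> \<oplus> \<F>(A\<^sub>n)\<close> has the bounded left inverse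
  \<open>S(\<nu>\<^sub>1, \<dots>, \<nu>\<^sub>n) = \<nu>\<^sub>1 + \<dots> + \<nu>\<^sub>n\<close>, so \<open>T\<close> is an isomorphism onto the range of the
  projection \<open>T \<circ> S\<close>.
\<close>

lemma bounded_linear_between_subset:
  assumes "bounded_linear_between X addX scX nX Y addY scY nY f"
    and "X' \<subseteq> X" and "f ` X' \<subseteq> Y'"
  shows "bounded_linear_between X' addX scX nX Y' addY scY nY f"
  using assms unfolding bounded_linear_between_def by (meson subsetD)

lemma bounded_linear_between_comp:
  assumes f: "bounded_linear_between X addX scX nX Y addY scY nY f"
    and g: "bounded_linear_between Y addY scY nY Z addZ scZ nZ g"
    and nY_nonneg: "\<forall>y\<in>Y. 0 \<le> nY y"
  shows "bounded_linear_between X addX scX nX Z addZ scZ nZ (g \<circ> f)"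
proof -
  obtain Cf where Cf: "\<forall>x\<in>X. nY (f x) \<le> Cf * nX x"
    using f unfolding bounded_linear_between_def by blast
  obtain Cg where Cg: "\<forall>y\<in>Y. nZ (g y) \<le> Cg * nY y"
    using g unfolding bounded_linear_between_def by blast
  have fX: "f ` X \<subseteq> Y" using f unfolding bounded_linear_between_def by blast
  have "nZ (g (f x)) \<le> (max 0 Cg * Cf) * nX x" if "x \<in> X" for x
  proof -
    have "nZ (g (f x)) \<le> max 0 Cg * nY (f x)"
      using Cg fX that nY_nonneg by (meson image_subset_iff max.cobounded2 mult_right_mono order_trans)
    also have "\<dots> \<le> max 0 Cg * (Cf * nX x)"
      using Cf that by (simp add: mult_left_mono)
    finally show ?thesis by (simp add: mult.assoc)
  qed
  then show ?thesis
    using f g unfolding bounded_linear_between_def by (auto simp: image_subset_iff)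
qed

lemma bounded_linear_left_inverse_complemented:
  assumes T: "bounded_linear_between X addX scX nX Y addY scY nY T"
    and S: "bounded_linear_between Y addY scY nY X addX scX nX S"
    and left_inverse: "\<forall>x\<in>X. S (T x) = x"
    and nX_nonneg: "\<forall>x\<in>X. 0 \<le> nX x"
  shows "bounded_linear_between Y addY scY nY Y addY scY nY (T \<circ> S)"
    and "\<forall>y\<in>Y. (T \<circ> S) ((T \<circ> S) y) = (T \<circ> S) y"
    and "bounded_linear_between X addX scX nX ((T \<circ> S) ` Y) addY scY nY T"
    and "bounded_linear_between ((T \<circ> S) ` Y) addY scY nY X addX scX nX S"
    and "\<forall>z\<in>(T \<circ> S) ` Y. T (S z) = z"
proof -
  have SY: "S ` Y \<subseteq> X" and TX: "T ` X \<subseteq> Y"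
    using S T unfolding bounded_linear_between_def by blast+
  show "bounded_linear_between Y addY scY nY Y addY scY nY (T \<circ> S)"
    using bounded_linear_between_comp[OF S T nX_nonneg] .
  show "\<forall>y\<in>Y. (T \<circ> S) ((T \<circ> S) y) = (T \<circ> S) y"
    using SY left_inverse by auto
  have "T x = (T \<circ> S) (T x)" if "x \<in> X" for x
    using left_inverse that by simp
  then have "T ` X \<subseteq> (T \<circ> S) ` Y" using TX by blast
  then show "bounded_linear_between X addX scX nX ((T \<circ> S) ` Y) addY scY nY T"
    using bounded_linear_between_subset[OF T] by blast
  show "bounded_linear_between ((T \<circ> S) ` Y) addY scY nY X addX scX nX S"
    using bounded_linear_between_subset[OF S] TX SY by (auto simp: image_subset_iff)
  show "\<forall>z\<in>(T \<circ> S) ` Y. T (S z) = z"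
    using SY left_inverse by auto
qed

lemma sum_Un_coefficients:
  fixes a b :: "'a \<Rightarrow> real"
  assumes "finite F" "finite G"
  shows "\<exists>c. \<forall>h. (\<Sum>x\<in>F \<union> G. c x * h x) = (\<Sum>x\<in>F. a x * h x) + (\<Sum>x\<in>G. b x * h x)"
proof (intro exI allI)
  fix h :: "'a \<Rightarrow> real"
  have restrict: "(\<Sum>x\<in>F \<union> G. (if x \<in> H then c x else 0) * h x) = (\<Sum>x\<in>H. c x * h x)"
    if "H \<subseteq> F \<union> G" for H c
    using assms that by (intro sum.mono_neutral_cong_right) auto
  show "(\<Sum>x\<in>F \<union> G. ((if x \<in> F then a x else 0) + (if x \<in> G then b x else 0)) * h x)
      = (\<Sum>x\<in>F. a x * h x) + (\<Sum>x\<in>G. b x * h x)"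
    by (simp only: distrib_right sum.distrib restrict Un_upper1 Un_upper2)
qed

locale pointed_metric_space = Metric_space M d for M :: "'a set" and d +
  fixes p :: 'a
  assumes base_point: "p \<in> M"
begin

lemma lipnorm_nonneg: "f \<in> Lip0 M d p \<Longrightarrow> 0 \<le> lipnorm M d f"
  unfolding lipnorm_def Lip0_def by (rule cInf_greatest) (auto simp: lip_on_def)

lemma lipnorm_le: "lip_on M d L f \<Longrightarrow> lipnorm M d f \<le> L"
  unfolding lipnorm_def
  by (rule cInf_lower) (auto simp: bdd_below_def lip_on_def intro!: exI[of _ 0])

lemma lip_on_lipnorm:
  assumes f: "f \<in> Lip0 M d p"
  shows "lip_on M d (lipnorm M d f) f"
proof -
  have ne: "{L. lip_on M d L f} \<noteq> {}" using f unfolding Lip0_def by auto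
  have "\<bar>f x - f y\<bar> \<le> lipnorm M d f * d x y" if "x \<in> M" "y \<in> M" for x y
  proof (cases "x = y")
    case False
    then have pos: "d x y > 0" using that nonneg[of x y] zero[OF that] by linarith
    have "\<bar>f x - f y\<bar> / d x y \<le> lipnorm M d f"
      unfolding lipnorm_def
    proof (rule cInf_greatest[OF ne])
      fix L assume "L \<in> {L. lip_on M d L f}"
      then show "\<bar>f x - f y\<bar> / d x y \<le> L"
        using that pos unfolding lip_on_def by (simp add: divide_le_eq)
    qed
    then show ?thesis using pos by (simp add: divide_le_eq)
  qed (use that in simp)
  then show ?thesis using lipnorm_nonneg[OF f] unfolding lip_on_def by auto
qed

lemma Lip0_abs_le:
  assumes "f \<in> Lip0 M d p" "x \<in> M"
  shows "\<bar>f x\<bar> \<le> lipnorm M d f * d p x"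
proof -
  have "f p = 0" using assms unfolding Lip0_def by auto
  then show ?thesis
    using lip_on_lipnorm[OF assms(1)] assms(2) base_point unfolding lip_on_def
    by (metis diff_zero commute)
qed

lemma Lip0_zero: "(\<lambda>x. 0) \<in> Lip0 M d p"
  unfolding Lip0_def lip_on_def by auto

lemma Lip0_add:
  assumes "f \<in> Lip0 M d p" "g \<in> Lip0 M d p"
  shows "(\<lambda>x. f x + g x) \<in> Lip0 M d p"
proof -
  obtain Lf Lg where "lip_on M d Lf f" "lip_on M d Lg g" using assms unfolding Lip0_def by auto
  then have "lip_on M d (Lf + Lg) (\<lambda>x. f x + g x)"
    unfolding lip_on_def by (smt (verit, best) distrib_right)
  then show ?thesis using assms unfolding Lip0_def by auto
qed

lemma Lip0_scale:
  assumes "f \<in> Lip0 M d p"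
  shows "(\<lambda>x. c * f x) \<in> Lip0 M d p"
proof -
  obtain L where L: "lip_on M d L f" using assms unfolding Lip0_def by auto
  have "\<bar>c * f x - c * f y\<bar> \<le> \<bar>c\<bar> * L * d x y" if "x \<in> M" "y \<in> M" for x y
  proof -
    have "\<bar>c * f x - c * f y\<bar> = \<bar>c\<bar> * \<bar>f x - f y\<bar>" by (simp add: abs_mult right_diff_distrib[symmetric])
    also have "\<dots> \<le> \<bar>c\<bar> * (L * d x y)" using L that unfolding lip_on_def by (simp add: mult_left_mono)
    finally show ?thesis by (simp add: mult.assoc)
  qed
  then have "lip_on M d (\<bar>c\<bar> * L) (\<lambda>x. c * f x)" using L unfolding lip_on_def by simp
  then show ?thesis using assms unfolding Lip0_def by auto
qed

lemma Lip0_sum: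
  "finite I \<Longrightarrow> (\<And>i. i \<in> I \<Longrightarrow> g i \<in> Lip0 M d p) \<Longrightarrow> (\<lambda>x. \<Sum>i\<in>I. g i x) \<in> Lip0 M d p"
  by (induction I rule: finite_induct) (auto simp: Lip0_zero Lip0_add)

lemma Lip0_dual_add_apply:
  "D \<in> Lip0_dual M d p \<Longrightarrow> f \<in> Lip0 M d p \<Longrightarrow> g \<in> Lip0 M d p \<Longrightarrow> D (\<lambda>x. f x + g x) = D f + D g"
  unfolding Lip0_dual_def by blast

lemma Lip0_dual_scale_apply:
  "D \<in> Lip0_dual M d p \<Longrightarrow> f \<in> Lip0 M d p \<Longrightarrow> D (\<lambda>x. c * f x) = c * D f"
  unfolding Lip0_dual_def by blast

lemma Lip0_dual_outside: "D \<in> Lip0_dual M d p \<Longrightarrow> f \<notin> Lip0 M d p \<Longrightarrow> D f = 0"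
  unfolding Lip0_dual_def by blast

lemma Lip0_dual_zero_apply: "D \<in> Lip0_dual M d p \<Longrightarrow> D (\<lambda>x. 0) = 0"
  using Lip0_dual_scale_apply[OF _ Lip0_zero, of D 0] by simp

lemma Lip0_dual_sum_apply:
  assumes "D \<in> Lip0_dual M d p"
  shows "finite I \<Longrightarrow> (\<And>i. i \<in> I \<Longrightarrow> g i \<in> Lip0 M d p) \<Longrightarrow>
    D (\<lambda>x. \<Sum>i\<in>I. g i x) = (\<Sum>i\<in>I. D (g i))"
proof (induction I rule: finite_induct)
  case (insert a I)
  then show ?case
    using Lip0_dual_add_apply[OF assms _ Lip0_sum, of "g a" I g] by simp
qed (simp add: Lip0_dual_zero_apply[OF assms])

lemma Lip0_dualI:
  assumes "\<And>f g. f \<in> Lip0 M d p \<Longrightarrow> g \<in> Lip0 M d p \<Longrightarrow> D (\<lambda>x. f x + g x) = D f + D g"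
    and "\<And>f c. f \<in> Lip0 M d p \<Longrightarrow> D (\<lambda>x. c * f x) = c * D f"
    and "\<And>f. f \<in> Lip0 M d p \<Longrightarrow> \<bar>D f\<bar> \<le> C * lipnorm M d f"
    and "\<And>f. f \<notin> Lip0 M d p \<Longrightarrow> D f = 0"
  shows "D \<in> Lip0_dual M d p"
  using assms unfolding Lip0_dual_def by blast

lemma Lip0_dual_zero: "(\<lambda>f. 0) \<in> Lip0_dual M d p"
  by (rule Lip0_dualI[where C = 0]) auto

lemma Lip0_dual_add:
  assumes a: "a \<in> Lip0_dual M d p" and b: "b \<in> Lip0_dual M d p"
  shows "fadd a b \<in> Lip0_dual M d p"
proof -
  obtain Ca Cb where "\<forall>f\<in>Lip0 M d p. \<bar>a f\<bar> \<le> Ca * lipnorm M d f"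
    and "\<forall>f\<in>Lip0 M d p. \<bar>b f\<bar> \<le> Cb * lipnorm M d f"
    using a b unfolding Lip0_dual_def by blast
  then have "\<bar>a f + b f\<bar> \<le> (Ca + Cb) * lipnorm M d f" if "f \<in> Lip0 M d p" for f
    using that abs_triangle_ineq[of "a f" "b f"] by (fastforce simp: distrib_right)
  then show ?thesis
    using Lip0_dual_add_apply[OF a] Lip0_dual_add_apply[OF b]
      Lip0_dual_scale_apply[OF a] Lip0_dual_scale_apply[OF b] Lip0_dual_outside[OF a] Lip0_dual_outside[OF b]
    unfolding fadd_def by (intro Lip0_dualI[where C = "Ca + Cb"]) (auto simp: distrib_left)
qed

lemma Lip0_dual_scale:
  assumes a: "a \<in> Lip0_dual M d p"
  shows "fscale c a \<in> Lip0_dual M d p"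
proof -
  obtain C where "\<forall>f\<in>Lip0 M d p. \<bar>a f\<bar> \<le> C * lipnorm M d f"
    using a unfolding Lip0_dual_def by blast
  then have "\<bar>c * a f\<bar> \<le> (\<bar>c\<bar> * C) * lipnorm M d f" if "f \<in> Lip0 M d p" for f
    using that by (simp add: abs_mult mult_left_mono mult.assoc)
  then show ?thesis
    using Lip0_dual_add_apply[OF a] Lip0_dual_scale_apply[OF a] Lip0_dual_outside[OF a]
    unfolding fscale_def by (intro Lip0_dualI[where C = "\<bar>c\<bar> * C"]) (auto simp: distrib_left)
qed

lemma Lip0_dual_diff:
  assumes "a \<in> Lip0_dual M d p" "b \<in> Lip0_dual M d p"
  shows "(\<lambda>f. a f - b f) \<in> Lip0_dual M d p"
  using Lip0_dual_add[OF assms(1) Lip0_dual_scale[OF assms(2), of "-1"]]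
  by (simp add: fadd_def fscale_def)

lemma Lip0_dual_sum:
  "finite I \<Longrightarrow> (\<And>k. k \<in> I \<Longrightarrow> \<nu> k \<in> Lip0_dual M d p) \<Longrightarrow> (\<lambda>f. \<Sum>k\<in>I. \<nu> k f) \<in> Lip0_dual M d p"
proof (induction I rule: finite_induct)
  case (insert a I)
  then show ?case using Lip0_dual_add[of "\<nu> a" "\<lambda>f. \<Sum>k\<in>I. \<nu> k f"] by (simp add: fadd_def)
qed (simp add: Lip0_dual_zero)

lemma Lip0_dual_delta: "x \<in> M \<Longrightarrow> delta M d p x \<in> Lip0_dual M d p"
  by (rule Lip0_dualI[where C = "d p x"])
    (auto simp: delta_def Lip0_add Lip0_scale dest: Lip0_abs_le[of _ x] simp flip: mult.commute)

lemma Lip0_dual_delta_sum: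
  "finite F \<Longrightarrow> F \<subseteq> M \<Longrightarrow> (\<lambda>f. \<Sum>x\<in>F. c x * delta M d p x f) \<in> Lip0_dual M d p"
  using Lip0_dual_sum[of F "\<lambda>x. fscale (c x) (delta M d p x)"] Lip0_dual_scale Lip0_dual_delta
  by (auto simp: fscale_def subset_iff)

lemma dual_norm_le:
  "(\<And>f. f \<in> Lip0 M d p \<Longrightarrow> lipnorm M d f \<le> 1 \<Longrightarrow> \<bar>D f\<bar> \<le> B) \<Longrightarrow> dual_norm M d p D \<le> B"
  unfolding dual_norm_def
  using Lip0_zero lipnorm_le[of 0 "\<lambda>x. 0"] by (intro cSup_least) (auto simp: lip_on_def)

lemma abs_le_dual_norm:
  assumes D: "D \<in> Lip0_dual M d p" and f: "f \<in> Lip0 M d p" "lipnorm M d f \<le> 1"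
  shows "\<bar>D f\<bar> \<le> dual_norm M d p D"
proof -
  obtain C where C: "\<forall>g\<in>Lip0 M d p. \<bar>D g\<bar> \<le> C * lipnorm M d g"
    using D unfolding Lip0_dual_def by blast
  have "\<bar>D g\<bar> \<le> \<bar>C\<bar>" if g: "g \<in> Lip0 M d p" "lipnorm M d g \<le> 1" for g
  proof -
    have "\<bar>D g\<bar> \<le> C * lipnorm M d g" using C g by blast
    also have "\<dots> \<le> \<bar>C\<bar> * lipnorm M d g" using lipnorm_nonneg[OF g(1)] by (simp add: mult_right_mono)
    also have "\<dots> \<le> \<bar>C\<bar>" using g lipnorm_nonneg[OF g(1)] by (simp add: mult_left_le)
    finally show ?thesis .
  qed
  then have "bdd_above {\<bar>D g\<bar> | g. g \<in> Lip0 M d p \<and> lipnorm M d g \<le> 1}"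
    unfolding bdd_above_def by blast
  then show ?thesis unfolding dual_norm_def using f by (auto intro!: cSup_upper)
qed

lemma dual_norm_nonneg: "D \<in> Lip0_dual M d p \<Longrightarrow> 0 \<le> dual_norm M d p D"
  using abs_le_dual_norm[OF _ Lip0_zero] lipnorm_le[of 0 "\<lambda>x. 0"] by (force simp: lip_on_def)

lemma abs_apply_le_dual_norm:
  assumes D: "D \<in> Lip0_dual M d p" and g: "g \<in> Lip0 M d p"
  shows "\<bar>D g\<bar> \<le> dual_norm M d p D * lipnorm M d g"
proof (cases "lipnorm M d g = 0")
  case True
  have "g x = 0" for x
    using Lip0_abs_le[OF g, of x] g True unfolding Lip0_def by (cases "x \<in> M") auto
  then have "g = (\<lambda>x. 0)" by blast
  then show ?thesis using Lip0_dual_zero_apply[OF D] True by simp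
next
  case False
  let ?l = "lipnorm M d g"
  have l: "?l > 0" using False lipnorm_nonneg[OF g] by linarith
  define h where "h x = (1 / ?l) * g x" for x
  have h: "h \<in> Lip0 M d p" unfolding h_def by (rule Lip0_scale[OF g])
  have "lip_on M d 1 h"
    using lip_on_lipnorm[OF g] l unfolding lip_on_def h_def
    by (simp add: diff_divide_distrib[symmetric] divide_le_eq mult.commute)
  then have h_norm: "lipnorm M d h \<le> 1" by (rule lipnorm_le)
  have "D h = (1 / ?l) * D g"
    unfolding h_def by (rule Lip0_dual_scale_apply[OF D g])
  then have "D g = ?l * D h" using l by simp
  then show ?thesis
    using abs_le_dual_norm[OF D h h_norm] l by (simp add: abs_mult mult.commute)
qed

lemma dual_norm_add:
  assumes "a \<in> Lip0_dual M d p" "b \<in> Lip0_dual M d p"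
  shows "dual_norm M d p (fadd a b) \<le> dual_norm M d p a + dual_norm M d p b"
proof (rule dual_norm_le)
  fix f assume "f \<in> Lip0 M d p" "lipnorm M d f \<le> 1"
  then show "\<bar>fadd a b f\<bar> \<le> dual_norm M d p a + dual_norm M d p b"
    using abs_le_dual_norm[OF assms(1)] abs_le_dual_norm[OF assms(2)] abs_triangle_ineq[of "a f" "b f"]
    unfolding fadd_def by fastforce
qed

lemma dual_norm_sum_le:
  "finite I \<Longrightarrow> (\<And>k. k \<in> I \<Longrightarrow> \<nu> k \<in> Lip0_dual M d p) \<Longrightarrow>
    dual_norm M d p (\<lambda>f. \<Sum>k\<in>I. \<nu> k f) \<le> (\<Sum>k\<in>I. dual_norm M d p (\<nu> k))"
proof (induction I rule: finite_induct)
  case empty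
  then show ?case by (simp add: dual_norm_le)
next
  case (insert a I)
  then have "dual_norm M d p (fadd (\<nu> a) (\<lambda>f. \<Sum>k\<in>I. \<nu> k f))
      \<le> dual_norm M d p (\<nu> a) + dual_norm M d p (\<lambda>f. \<Sum>k\<in>I. \<nu> k f)"
    by (intro dual_norm_add Lip0_dual_sum) auto
  with insert show ?case by (simp add: fadd_def)
qed

lemma Free_Lip0_dual: "\<mu> \<in> Free M d p A \<Longrightarrow> \<mu> \<in> Lip0_dual M d p"
  unfolding Free_def by blast

lemma Free_approx:
  "\<mu> \<in> Free M d p A \<Longrightarrow> e > 0 \<Longrightarrow>
    \<exists>F c. finite F \<and> F \<subseteq> A \<and> dual_norm M d p (\<lambda>f. \<mu> f - (\<Sum>x\<in>F. c x * delta M d p x f)) < e"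
  unfolding Free_def by blast

lemma FreeI:
  assumes "\<mu> \<in> Lip0_dual M d p"
    and "\<And>e. e > 0 \<Longrightarrow> \<exists>F c. finite F \<and> F \<subseteq> A \<and>
      dual_norm M d p (\<lambda>f. \<mu> f - (\<Sum>x\<in>F. c x * delta M d p x f)) < e"
  shows "\<mu> \<in> Free M d p A"
  using assms unfolding Free_def by blast

lemma Free_mono:
  assumes "A \<subseteq> B"
  shows "Free M d p A \<subseteq> Free M d p B"
proof
  fix \<mu> assume \<mu>: "\<mu> \<in> Free M d p A"
  show "\<mu> \<in> Free M d p B"
  proof (rule FreeI[OF Free_Lip0_dual[OF \<mu>]])
    fix e :: real assume "e > 0"
    then show "\<exists>F c. finite F \<and> F \<subseteq> B \<and>
        dual_norm M d p (\<lambda>f. \<mu> f - (\<Sum>x\<in>F. c x * delta M d p x f)) < e"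
      using Free_approx[OF \<mu>] assms by (meson order_trans)
  qed
qed

lemma Free_zero: "(\<lambda>f. 0) \<in> Free M d p A"
proof (rule FreeI[OF Lip0_dual_zero])
  fix e :: real assume "e > 0"
  moreover have "dual_norm M d p (\<lambda>f. 0) \<le> 0" by (rule dual_norm_le) simp
  ultimately show "\<exists>F c. finite F \<and> F \<subseteq> A \<and>
      dual_norm M d p (\<lambda>f. 0 - (\<Sum>x\<in>F. c x * delta M d p x f)) < e"
    by (intro exI[of _ "{}"]) simp
qed

lemma Free_add:
  assumes a: "a \<in> Free M d p A" and b: "b \<in> Free M d p A" and "A \<subseteq> M"
  shows "fadd a b \<in> Free M d p A"
proof -
  have "\<exists>F c. finite F \<and> F \<subseteq> A \<and>
      dual_norm M d p (\<lambda>f. fadd a b f - (\<Sum>x\<in>F. c x * delta M d p x f)) < e" if e: "e > 0" for e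
  proof -
    obtain Fa ca where Fa: "finite Fa" "Fa \<subseteq> A"
      and a_approx: "dual_norm M d p (\<lambda>f. a f - (\<Sum>x\<in>Fa. ca x * delta M d p x f)) < e / 2"
      using Free_approx[OF a, of "e / 2"] e by auto
    obtain Fb cb where Fb: "finite Fb" "Fb \<subseteq> A"
      and b_approx: "dual_norm M d p (\<lambda>f. b f - (\<Sum>x\<in>Fb. cb x * delta M d p x f)) < e / 2"
      using Free_approx[OF b, of "e / 2"] e by auto
    obtain c where c: "\<And>h. (\<Sum>x\<in>Fa \<union> Fb. c x * h x) = (\<Sum>x\<in>Fa. ca x * h x) + (\<Sum>x\<in>Fb. cb x * h x)"
      using sum_Un_coefficients[OF Fa(1) Fb(1)] by blast
    let ?Da = "\<lambda>f. a f - (\<Sum>x\<in>Fa. ca x * delta M d p x f)"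
    let ?Db = "\<lambda>f. b f - (\<Sum>x\<in>Fb. cb x * delta M d p x f)"
    have "(\<lambda>f. fadd a b f - (\<Sum>x\<in>Fa \<union> Fb. c x * delta M d p x f)) = fadd ?Da ?Db"
      by (simp add: c fadd_def algebra_simps)
    moreover have "?Da \<in> Lip0_dual M d p"
      using Fa \<open>A \<subseteq> M\<close> by (intro Lip0_dual_diff Free_Lip0_dual[OF a] Lip0_dual_delta_sum) auto
    moreover have "?Db \<in> Lip0_dual M d p"
      using Fb \<open>A \<subseteq> M\<close> by (intro Lip0_dual_diff Free_Lip0_dual[OF b] Lip0_dual_delta_sum) auto
    ultimately show ?thesis
      using dual_norm_add[of ?Da ?Db] a_approx b_approx Fa Fb
      by (intro exI[of _ "Fa \<union> Fb"] exI[of _ c]) auto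
  qed
  then show ?thesis
    by (intro FreeI Lip0_dual_add Free_Lip0_dual[OF a] Free_Lip0_dual[OF b])
qed

lemma Free_sum:
  assumes "A \<subseteq> M"
  shows "finite I \<Longrightarrow> (\<And>k. k \<in> I \<Longrightarrow> \<nu> k \<in> Free M d p A) \<Longrightarrow> (\<lambda>f. \<Sum>k\<in>I. \<nu> k f) \<in> Free M d p A"
proof (induction I rule: finite_induct)
  case (insert a I)
  then show ?case using Free_add[OF _ _ assms, of "\<nu> a" "\<lambda>f. \<Sum>k\<in>I. \<nu> k f"] by (simp add: fadd_def)
qed (simp add: Free_zero)

end

definition mult_fun :: "'a set \<Rightarrow> ('a \<Rightarrow> real) \<Rightarrow> ('a \<Rightarrow> real) \<Rightarrow> ('a \<Rightarrow> real)" where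
  "mult_fun M \<phi> f = (\<lambda>x. if x \<in> M then \<phi> x * f x else 0)"

definition mult_dual ::
  "'a set \<Rightarrow> ('a \<Rightarrow> 'a \<Rightarrow> real) \<Rightarrow> 'a \<Rightarrow> ('a \<Rightarrow> real) \<Rightarrow> (('a \<Rightarrow> real) \<Rightarrow> real) \<Rightarrow> (('a \<Rightarrow> real) \<Rightarrow> real)"
  where "mult_dual M d p \<phi> \<mu> = (\<lambda>f. if f \<in> Lip0 M d p then \<mu> (mult_fun M \<phi> f) else 0)"

lemma mult_fun_add: "mult_fun M \<phi> (\<lambda>x. f x + g x) = (\<lambda>x. mult_fun M \<phi> f x + mult_fun M \<phi> g x)"
  unfolding mult_fun_def by (auto simp: algebra_simps)

lemma mult_fun_scale: "mult_fun M \<phi> (\<lambda>x. c * f x) = (\<lambda>x. c * mult_fun M \<phi> f x)"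
  unfolding mult_fun_def by (auto simp: algebra_simps)

locale lipschitz_multiplier = pointed_metric_space +
  fixes \<phi> :: "'a \<Rightarrow> real" and B Lp R :: real
  assumes lip_on_multiplier: "lip_on M d Lp \<phi>"
    and multiplier_bounded: "\<And>x. x \<in> M \<Longrightarrow> \<bar>\<phi> x\<bar> \<le> B"
    and support_radius: "\<And>x. x \<in> M \<Longrightarrow> \<phi> x \<noteq> 0 \<Longrightarrow> d p x \<le> R"
    and radius_nonneg: "0 \<le> R"
begin

lemma multiplier_const_nonneg: "0 \<le> B + R * Lp"
  using multiplier_bounded[OF base_point] radius_nonneg lip_on_multiplier
  unfolding lip_on_def by (smt (verit) zero_le_mult_iff)

lemma abs_mult_diff_le:
  assumes f: "f \<in> Lip0 M d p" and xy: "x \<in> M" "y \<in> M"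
  shows "\<bar>\<phi> x * f x - \<phi> y * f y\<bar> \<le> (B + R * Lp) * lipnorm M d f * d x y"
proof -
  let ?L = "lipnorm M d f"
  have key: "\<bar>\<phi> x * f x - \<phi> y * f y\<bar> \<le> (B + R * Lp) * ?L * d x y"
    if xy: "x \<in> M" "y \<in> M" and "\<phi> x \<noteq> 0" for x y
  proof -
    have "\<bar>f x\<bar> \<le> ?L * R"
      using Lip0_abs_le[OF f xy(1)] support_radius[OF xy(1) \<open>\<phi> x \<noteq> 0\<close>] lipnorm_nonneg[OF f]
      by (meson mult_left_mono order_trans)
    moreover have "\<bar>f x - f y\<bar> \<le> ?L * d x y"
      using lip_on_lipnorm[OF f] xy unfolding lip_on_def by blast
    moreover have "\<bar>\<phi> x - \<phi> y\<bar> \<le> Lp * d x y" "0 \<le> Lp"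
      using lip_on_multiplier xy unfolding lip_on_def by auto
    ultimately have bound: "\<bar>\<phi> y\<bar> * \<bar>f x - f y\<bar> + \<bar>f x\<bar> * \<bar>\<phi> x - \<phi> y\<bar>
        \<le> B * (?L * d x y) + (?L * R) * (Lp * d x y)"
      using multiplier_bounded[OF xy(2)] by (intro add_mono mult_mono) auto
    have "\<bar>\<phi> x * f x - \<phi> y * f y\<bar> = \<bar>\<phi> y * (f x - f y) + f x * (\<phi> x - \<phi> y)\<bar>"
      by (simp add: algebra_simps)
    also have "\<dots> \<le> \<bar>\<phi> y\<bar> * \<bar>f x - f y\<bar> + \<bar>f x\<bar> * \<bar>\<phi> x - \<phi> y\<bar>"
      by (metis abs_mult abs_triangle_ineq)
    also have "\<dots> \<le> (B + R * Lp) * ?L * d x y"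
      using bound by (simp add: algebra_simps)
    finally show ?thesis .
  qed
  consider "\<phi> x \<noteq> 0" | "\<phi> y \<noteq> 0" | "\<phi> x = 0" "\<phi> y = 0" by blast
  then show ?thesis
  proof cases
    case 2
    then show ?thesis using key[OF xy(2,1)] by (simp add: abs_minus_commute commute)
  next
    case 3
    then show ?thesis using multiplier_const_nonneg lipnorm_nonneg[OF f] by simp
  qed (use key xy in blast)
qed

lemma Lip0_mult_fun: "f \<in> Lip0 M d p \<Longrightarrow> mult_fun M \<phi> f \<in> Lip0 M d p"
  and lipnorm_mult_fun_le: "f \<in> Lip0 M d p \<Longrightarrow> lipnorm M d (mult_fun M \<phi> f) \<le> (B + R * Lp) * lipnorm M d f"
proof -
  assume f: "f \<in> Lip0 M d p"
  have "lip_on M d ((B + R * Lp) * lipnorm M d f) (mult_fun M \<phi> f)"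
    using abs_mult_diff_le[OF f] multiplier_const_nonneg lipnorm_nonneg[OF f]
    unfolding lip_on_def mult_fun_def by simp
  then show "mult_fun M \<phi> f \<in> Lip0 M d p" "lipnorm M d (mult_fun M \<phi> f) \<le> (B + R * Lp) * lipnorm M d f"
    using f base_point lipnorm_le unfolding Lip0_def mult_fun_def by auto
qed

end

lemma mult_dual_diff:
  "mult_dual M d p \<phi> (\<lambda>f. a f - b f) = (\<lambda>f. mult_dual M d p \<phi> a f - mult_dual M d p \<phi> b f)"
  unfolding mult_dual_def by auto

context lipschitz_multiplier
begin

lemma abs_mult_dual_le:
  assumes \<mu>: "\<mu> \<in> Lip0_dual M d p" and f: "f \<in> Lip0 M d p"
  shows "\<bar>mult_dual M d p \<phi> \<mu> f\<bar> \<le> (B + R * Lp) * dual_norm M d p \<mu> * lipnorm M d f"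
proof -
  have "\<bar>\<mu> (mult_fun M \<phi> f)\<bar> \<le> dual_norm M d p \<mu> * lipnorm M d (mult_fun M \<phi> f)"
    using abs_apply_le_dual_norm[OF \<mu> Lip0_mult_fun[OF f]] .
  also have "\<dots> \<le> dual_norm M d p \<mu> * ((B + R * Lp) * lipnorm M d f)"
    using lipnorm_mult_fun_le[OF f] dual_norm_nonneg[OF \<mu>] by (rule mult_left_mono)
  finally show ?thesis
    using f unfolding mult_dual_def by (simp add: ac_simps)
qed

lemma mult_dual_Lip0_dual:
  assumes \<mu>: "\<mu> \<in> Lip0_dual M d p"
  shows "mult_dual M d p \<phi> \<mu> \<in> Lip0_dual M d p"
proof (rule Lip0_dualI[OF _ _ abs_mult_dual_le[OF \<mu>]])
  fix f g assume "f \<in> Lip0 M d p" "g \<in> Lip0 M d p"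
  then show "mult_dual M d p \<phi> \<mu> (\<lambda>x. f x + g x) = mult_dual M d p \<phi> \<mu> f + mult_dual M d p \<phi> \<mu> g"
    unfolding mult_dual_def mult_fun_add
    by (simp add: Lip0_add Lip0_dual_add_apply[OF \<mu>] Lip0_mult_fun)
next
  fix f c assume "f \<in> Lip0 M d p"
  then show "mult_dual M d p \<phi> \<mu> (\<lambda>x. c * f x) = c * mult_dual M d p \<phi> \<mu> f"
    unfolding mult_dual_def mult_fun_scale
    by (simp add: Lip0_scale Lip0_dual_scale_apply[OF \<mu>] Lip0_mult_fun)
next
  fix f assume "f \<notin> Lip0 M d p"
  then show "mult_dual M d p \<phi> \<mu> f = 0" unfolding mult_dual_def by simp
qed

lemma dual_norm_mult_dual_le:
  assumes \<mu>: "\<mu> \<in> Lip0_dual M d p"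
  shows "dual_norm M d p (mult_dual M d p \<phi> \<mu>) \<le> (B + R * Lp) * dual_norm M d p \<mu>"
proof (rule dual_norm_le)
  fix f assume f: "f \<in> Lip0 M d p" "lipnorm M d f \<le> 1"
  have "0 \<le> (B + R * Lp) * dual_norm M d p \<mu>"
    using multiplier_const_nonneg dual_norm_nonneg[OF \<mu>] by simp
  then show "\<bar>mult_dual M d p \<phi> \<mu> f\<bar> \<le> (B + R * Lp) * dual_norm M d p \<mu>"
    using abs_mult_dual_le[OF \<mu> f(1)] f lipnorm_nonneg[OF f(1)]
    by (meson mult_left_le order_trans)
qed

lemma mult_dual_delta_sum:
  assumes "finite F" "F \<subseteq> M"
  shows "mult_dual M d p \<phi> (\<lambda>f. \<Sum>x\<in>F. c x * delta M d p x f)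
    = (\<lambda>f. \<Sum>x\<in>{x \<in> F. \<phi> x \<noteq> 0}. (c x * \<phi> x) * delta M d p x f)"
proof
  fix f
  show "mult_dual M d p \<phi> (\<lambda>f. \<Sum>x\<in>F. c x * delta M d p x f) f
      = (\<Sum>x\<in>{x \<in> F. \<phi> x \<noteq> 0}. (c x * \<phi> x) * delta M d p x f)"
  proof (cases "f \<in> Lip0 M d p")
    case True
    have "(\<Sum>x\<in>F. c x * (\<phi> x * f x)) = (\<Sum>x\<in>{x \<in> F. \<phi> x \<noteq> 0}. c x * (\<phi> x * f x))"
      using assms(1) by (intro sum.mono_neutral_right) auto
    then show ?thesis
      using True Lip0_mult_fun[OF True] assms(2)
      by (auto simp: mult_dual_def delta_def mult_fun_def subset_iff mult.assoc intro!: sum.cong)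
  qed (simp add: mult_dual_def delta_def)
qed

lemma mult_dual_Free:
  assumes \<mu>: "\<mu> \<in> Free M d p M" and support: "{x \<in> M. \<phi> x \<noteq> 0} \<subseteq> A"
  shows "mult_dual M d p \<phi> \<mu> \<in> Free M d p A"
proof -
  let ?K = "B + R * Lp"
  have "\<exists>F c. finite F \<and> F \<subseteq> A \<and>
      dual_norm M d p (\<lambda>f. mult_dual M d p \<phi> \<mu> f - (\<Sum>x\<in>F. c x * delta M d p x f)) < e"
    if e: "e > 0" for e
  proof -
    have "e / (?K + 1) > 0" using e multiplier_const_nonneg by simp
    then obtain F c where F: "finite F" "F \<subseteq> M"
      and approx: "dual_norm M d p (\<lambda>f. \<mu> f - (\<Sum>x\<in>F. c x * delta M d p x f)) < e / (?K + 1)"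
      using Free_approx[OF \<mu>] by blast
    let ?D = "\<lambda>f. \<mu> f - (\<Sum>x\<in>F. c x * delta M d p x f)"
    have D: "?D \<in> Lip0_dual M d p"
      using F by (intro Lip0_dual_diff Free_Lip0_dual[OF \<mu>] Lip0_dual_delta_sum)
    have "dual_norm M d p (mult_dual M d p \<phi> ?D) \<le> ?K * dual_norm M d p ?D"
      by (rule dual_norm_mult_dual_le[OF D])
    also have "\<dots> \<le> ?K * (e / (?K + 1))"
      using approx multiplier_const_nonneg by (intro mult_left_mono) auto
    also have "\<dots> < e" using e multiplier_const_nonneg by (simp add: field_simps)
    finally show ?thesis
      using F support unfolding mult_dual_diff mult_dual_delta_sum[OF F]
      by (intro exI[of _ "{x \<in> F. \<phi> x \<noteq> 0}"] exI[of _ "\<lambda>x. c x * \<phi> x"]) auto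
  qed
  then show ?thesis
    by (intro FreeI mult_dual_Lip0_dual Free_Lip0_dual[OF \<mu>])
qed

end

definition mult_dual_family ::
  "'a set \<Rightarrow> ('a \<Rightarrow> 'a \<Rightarrow> real) \<Rightarrow> 'a \<Rightarrow> nat \<Rightarrow> (nat \<Rightarrow> 'a \<Rightarrow> real) \<Rightarrow> (('a \<Rightarrow> real) \<Rightarrow> real)
    \<Rightarrow> (nat \<Rightarrow> ('a \<Rightarrow> real) \<Rightarrow> real)"
  where "mult_dual_family M d p n \<phi> \<mu> = (\<lambda>k. if k < n then mult_dual M d p (\<phi> k) \<mu> else (\<lambda>f. 0))"

definition sum_family :: "nat \<Rightarrow> (nat \<Rightarrow> 'b \<Rightarrow> real) \<Rightarrow> ('b \<Rightarrow> real)" where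
  "sum_family n \<nu> = (\<lambda>f. \<Sum>k<n. \<nu> k f)"

lemma mult_dual_family_fadd:
  "mult_dual_family M d p n \<phi> (fadd a b) = sadd (mult_dual_family M d p n \<phi> a) (mult_dual_family M d p n \<phi> b)"
  and mult_dual_family_fscale:
  "mult_dual_family M d p n \<phi> (fscale c a) = sscale c (mult_dual_family M d p n \<phi> a)"
  unfolding mult_dual_family_def mult_dual_def sadd_def sscale_def fadd_def fscale_def
  by (simp_all add: fun_eq_iff)

lemma sum_family_sadd: "sum_family n (sadd \<nu> \<nu>') = fadd (sum_family n \<nu>) (sum_family n \<nu>')"
  and sum_family_sscale: "sum_family n (sscale c \<nu>) = fscale c (sum_family n \<nu>)"
  unfolding sum_family_def sadd_def sscale_def fadd_def fscale_def
  by (simp_all add: sum.distrib sum_distrib_left)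

context pointed_metric_space
begin

lemma sum_family_bounded_linear:
  assumes "\<And>k. k < n \<Longrightarrow> A k \<subseteq> M"
  shows "bounded_linear_between (DSum M d p n A) sadd sscale (dsum_norm M d p n)
    (Free M d p M) fadd fscale (dual_norm M d p) (sum_family n)"
  unfolding bounded_linear_between_def
proof (intro conjI allI ballI exI[of _ 1] image_subsetI)
  fix \<nu> assume "\<nu> \<in> DSum M d p n A"
  then have \<nu>: "\<nu> k \<in> Free M d p M" if "k < n" for k
    using Free_mono[OF assms[OF that]] that unfolding DSum_def by blast
  then show "sum_family n \<nu> \<in> Free M d p M"
    unfolding sum_family_def by (intro Free_sum) auto
  have "dual_norm M d p (sum_family n \<nu>) \<le> dsum_norm M d p n \<nu>"
    unfolding sum_family_def dsum_norm_def using \<nu> by (intro dual_norm_sum_le) (auto intro: Free_Lip0_dual)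
  then show "dual_norm M d p (sum_family n \<nu>) \<le> 1 * dsum_norm M d p n \<nu>" by simp
qed (simp_all add: sum_family_sadd sum_family_sscale)

lemma mult_dual_family_bounded_linear:
  assumes multiplier: "\<And>k. k < n \<Longrightarrow> lipschitz_multiplier M d p (\<phi> k) (B k) (Lp k) (R k)"
    and support: "\<And>k. k < n \<Longrightarrow> {x \<in> M. \<phi> k x \<noteq> 0} \<subseteq> A k"
  shows "bounded_linear_between (Free M d p M) fadd fscale (dual_norm M d p)
    (DSum M d p n A) sadd sscale (dsum_norm M d p n) (mult_dual_family M d p n \<phi>)"
  unfolding bounded_linear_between_def
proof (intro conjI allI ballI exI[of _ "\<Sum>k<n. B k + R k * Lp k"])
  show "mult_dual_family M d p n \<phi> ` Free M d p M \<subseteq> DSum M d p n A"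
    using lipschitz_multiplier.mult_dual_Free[OF multiplier _ support]
    unfolding DSum_def mult_dual_family_def by auto
next
  fix \<mu> assume "\<mu> \<in> Free M d p M"
  then have "dual_norm M d p (mult_dual M d p (\<phi> k) \<mu>) \<le> (B k + R k * Lp k) * dual_norm M d p \<mu>"
    if "k < n" for k
    using lipschitz_multiplier.dual_norm_mult_dual_le[OF multiplier[OF that] Free_Lip0_dual] by blast
  then show "dsum_norm M d p n (mult_dual_family M d p n \<phi> \<mu>)
      \<le> (\<Sum>k<n. B k + R k * Lp k) * dual_norm M d p \<mu>"
    unfolding dsum_norm_def mult_dual_family_def sum_distrib_right by (auto intro: sum_mono)
qed (simp_all add: mult_dual_family_fadd mult_dual_family_fscale)

lemma sum_mult_dual_family:
  assumes multiplier: "\<And>k. k < n \<Longrightarrow> lipschitz_multiplier M d p (\<phi> k) (B k) (Lp k) (R k)"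
    and partition: "\<And>x. x \<in> M \<Longrightarrow> (\<Sum>k<n. \<phi> k x) = 1"
    and \<mu>: "\<mu> \<in> Lip0_dual M d p"
  shows "sum_family n (mult_dual_family M d p n \<phi> \<mu>) = \<mu>"
proof
  fix f
  show "sum_family n (mult_dual_family M d p n \<phi> \<mu>) f = \<mu> f"
  proof (cases "f \<in> Lip0 M d p")
    case True
    have "(\<Sum>k<n. mult_fun M (\<phi> k) f x) = f x" for x
      using True partition unfolding mult_fun_def Lip0_def
      by (cases "x \<in> M") (simp_all add: sum_distrib_right[symmetric])
    then have "(\<lambda>x. \<Sum>k<n. mult_fun M (\<phi> k) f x) = f" by blast
    moreover have "mult_fun M (\<phi> k) f \<in> Lip0 M d p" if "k < n" for k
      using lipschitz_multiplier.Lip0_mult_fun[OF multiplier[OF that] True] .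
    ultimately show ?thesis
      using True Lip0_dual_sum_apply[OF \<mu>, of "{..<n}" "\<lambda>k. mult_fun M (\<phi> k) f"]
      unfolding sum_family_def mult_dual_family_def mult_dual_def by simp
  qed (simp add: sum_family_def mult_dual_family_def mult_dual_def Lip0_dual_outside[OF \<mu>])
qed

lemma mbounded_radius:
  assumes "mbounded S"
  shows "\<exists>R\<ge>0. \<forall>x\<in>S. d p x \<le> R"
proof -
  obtain B where "\<forall>x\<in>insert p S. \<forall>y\<in>insert p S. d x y \<le> B"
    using assms base_point mbounded_insert mbounded_alt by meson
  then show ?thesis by (intro exI[of _ "max 0 B"]) auto
qed

theorem Free_iso_complemented_in_sum_partition:
  assumes multiplier: "\<And>k. k < n \<Longrightarrow> lipschitz_multiplier M d p (\<phi> k) (B k) (Lp k) (R k)"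
    and partition: "\<And>x. x \<in> M \<Longrightarrow> (\<Sum>k<n. \<phi> k x) = 1"
    and support: "\<And>k. k < n \<Longrightarrow> {x \<in> M. \<phi> k x \<noteq> 0} \<subseteq> A k"
    and A: "\<And>k. k < n \<Longrightarrow> A k \<subseteq> M"
  shows "Free_iso_complemented_in_sum M d p n A"
proof -
  let ?T = "mult_dual_family M d p n \<phi>" and ?S = "sum_family n"
  have T: "bounded_linear_between (Free M d p M) fadd fscale (dual_norm M d p)
      (DSum M d p n A) sadd sscale (dsum_norm M d p n) ?T"
    by (rule mult_dual_family_bounded_linear) (use multiplier support in auto)
  have S: "bounded_linear_between (DSum M d p n A) sadd sscale (dsum_norm M d p n)
      (Free M d p M) fadd fscale (dual_norm M d p) ?S"
    by (rule sum_family_bounded_linear) (use A in auto)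
  have left_inverse: "\<forall>\<mu>\<in>Free M d p M. ?S (?T \<mu>) = \<mu>"
    using sum_mult_dual_family[of n \<phi> B Lp R] multiplier partition Free_Lip0_dual by blast
  have "\<forall>\<mu>\<in>Free M d p M. 0 \<le> dual_norm M d p \<mu>"
    using dual_norm_nonneg Free_Lip0_dual by blast
  note complemented = bounded_linear_left_inverse_complemented[OF T S, OF left_inverse this]
  show ?thesis
    unfolding Free_iso_complemented_in_sum_def Let_def
    using complemented left_inverse by blast
qed

end

theorem lemma2p4:
  fixes M :: "'a set" and d :: "'a \<Rightarrow> 'a \<Rightarrow> real" and p :: 'a
    and n :: nat and \<phi> :: "nat \<Rightarrow> 'a \<Rightarrow> real" and A :: "nat \<Rightarrow> 'a set"
  assumes "Metric_space M d"
    and "Metric_space.mcomplete M d"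
    and "p \<in> M"
    and "\<And>k. k < n \<Longrightarrow> \<exists>L. lip_on M d L (\<phi> k)"
    and "\<And>k x. k < n \<Longrightarrow> x \<in> M \<Longrightarrow> \<phi> k x \<ge> 0"
    and "\<And>k. k < n \<Longrightarrow>
           Metric_space.mbounded M d (Metric_space.mtopology M d closure_of {x \<in> M. \<phi> k x \<noteq> 0})"
    and "\<And>x. x \<in> M \<Longrightarrow> (\<Sum>k<n. \<phi> k x) = 1"
    and "\<And>k. k < n \<Longrightarrow> A k \<subseteq> M"
    and "\<And>k. k < n \<Longrightarrow> p \<in> A k"
    and "\<And>k. k < n \<Longrightarrow> Metric_space.mtopology M d closure_of {x \<in> M. \<phi> k x \<noteq> 0} \<subseteq> A k"
  shows "Free_iso_complemented_in_sum M d p n A"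
proof -
  interpret pointed_metric_space M d p
    using assms(1,3) by (simp add: pointed_metric_space_def pointed_metric_space_axioms_def)
  let ?supp = "\<lambda>k. {x \<in> M. \<phi> k x \<noteq> 0}"
  have supp_closure: "?supp k \<subseteq> mtopology closure_of ?supp k" for k
    by (rule closure_of_subset) auto
  obtain Lp where Lp: "\<And>k. k < n \<Longrightarrow> lip_on M d (Lp k) (\<phi> k)"
    using assms(4) by metis
  obtain R where R: "\<And>k. k < n \<Longrightarrow> 0 \<le> R k \<and> (\<forall>x\<in>mtopology closure_of ?supp k. d p x \<le> R k)"
    using mbounded_radius[OF assms(6)] by metis
  have "\<phi> k x \<le> (\<Sum>j<n. \<phi> j x)" if "k < n" "x \<in> M" for k x
    using that assms(5) by (intro member_le_sum) auto
  then have "\<bar>\<phi> k x\<bar> \<le> 1" if "k < n" "x \<in> M" for k x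
    using that assms(5,7) by fastforce
  then have multiplier: "lipschitz_multiplier M d p (\<phi> k) 1 (Lp k) (R k)" if "k < n" for k
    using that Lp R supp_closure pointed_metric_space_axioms
    unfolding lipschitz_multiplier_def lipschitz_multiplier_axioms_def by blast
  show ?thesis
    by (rule Free_iso_complemented_in_sum_partition[where B = "\<lambda>_. 1" and Lp = Lp and R = R])
      (use multiplier assms(7,8,10) supp_closure in blast)+
qed

end
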